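(* Let $G=(V,E)$ be a simple undirected graph, let $S_1,\ldots,S_k\subseteq E$, and let $b\in V$. Assign to every edge $e\in E$ an indeterminate $x_e$, and work in the polynomial ring $\mathbb{F}[x_e : e\in E]$ over a field $\mathbb{F}$ of characteristic $2$. For $l\ge 1$, let $\hat T_b(l)$ be the sum, over all admissible closed walks of length $l$ at $b$, of the weight of the walk, where: - a closed walk of length $l$ at $b$ is a sequence of vertices $b=v_0,v_1,\ldots,v_l=b$ with $\{v_{j-1},v_j\}\in E$ for all $j$ (vertices and edges may repeat), and its weight is $\prod_{j=1}^{l} x_{\{v_{j-1},v_j\}}$; - the walk is admissible if its first edge $\{v_0,v_1\}$ lies in $S_1$, and for every $i\in\{1,\ldots,k\}$ there is exactly one index $j\in\{1,\ldots,l\}$ with $\{v_{j-1},v_j\}\in S_i$. Suppose there exists a simple cycle in $G$ that contains exactly one edge of each $S_i$ and passes through an edge of $S_1$ having $b$ as an endpoint, and let $L$ be the minimum length of such a cycle. Then $\hat T_b(L)$ is a homogeneous polynomial of degree $L$ that is not identically zero, and $\hat T_b(l)$ is identically zero for every $l<L$.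
   Context: A simple cycle of length $L$ is a closed walk $v_0,\ldots,v_L=v_0$ with $v_0,\ldots,v_{L-1}$ pairwise distinct and $L\ge 3$; it "contains exactly one edge of $S_i$" if exactly one of its $L$ edges lies in $S_i$. *)

theory Defs
  imports Main "HOL-Library.Poly_Mapping"
begin

text \<open>Multivariate polynomials over 'F in indeterminates indexed by edges
  (an edge is a two-element vertex set): finitely supported maps from
  monomials (finitely supported exponent vectors on edges) to coefficients.\<close>
type_synonym ('v, 'f) epoly = "('v set \<Rightarrow>\<^sub>0 nat) \<Rightarrow>\<^sub>0 'f"

definition evar :: "'v set \<Rightarrow> ('v, 'f::comm_ring_1) epoly" where
  "evar e = Poly_Mapping.single (Poly_Mapping.single e 1) 1"

definition mon_degree :: "('a \<Rightarrow>\<^sub>0 nat) \<Rightarrow> nat" where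
  "mon_degree m = (\<Sum>e\<in>Poly_Mapping.keys m. Poly_Mapping.lookup m e)"

definition homogeneous_of_degree :: "((('a \<Rightarrow>\<^sub>0 nat) \<Rightarrow>\<^sub>0 'f::zero)) \<Rightarrow> nat \<Rightarrow> bool" where
  "homogeneous_of_degree p d \<longleftrightarrow> (\<forall>m\<in>Poly_Mapping.keys p. mon_degree m = d)"

definition simple_graph :: "'v set \<Rightarrow> 'v set set \<Rightarrow> bool" where
  "simple_graph V E \<longleftrightarrow> finite V \<and> (\<forall>e\<in>E. \<exists>u v. u \<in> V \<and> v \<in> V \<and> u \<noteq> v \<and> e = {u, v})"

definition closed_walk :: "'v set set \<Rightarrow> 'v \<Rightarrow> nat \<Rightarrow> (nat \<Rightarrow> 'v) \<Rightarrow> bool" where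
  "closed_walk E b l w \<longleftrightarrow> w 0 = b \<and> w l = b \<and> (\<forall>j\<in>{1..l}. {w (j-1), w j} \<in> E)"

definition edges_in :: "nat \<Rightarrow> (nat \<Rightarrow> 'v) \<Rightarrow> 'v set set \<Rightarrow> nat" where
  "edges_in l w S = card {j\<in>{1..l}. {w (j-1), w j} \<in> S}"

definition admissible_walk ::
  "'v set set \<Rightarrow> nat \<Rightarrow> (nat \<Rightarrow> 'v set set) \<Rightarrow> 'v \<Rightarrow> nat \<Rightarrow> (nat \<Rightarrow> 'v) \<Rightarrow> bool" where
  "admissible_walk E k S b l w \<longleftrightarrow> closed_walk E b l w \<and> {w 0, w 1} \<in> S 1 \<and>
     (\<forall>i\<in>{1..k}. edges_in l w (S i) = 1)"

text \<open>Walks are identified with their vertex sequences w 0, ..., w l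
  (values outside 0..l are normalised to undefined).\<close>
definition T_hat ::
  "'v set set \<Rightarrow> nat \<Rightarrow> (nat \<Rightarrow> 'v set set) \<Rightarrow> 'v \<Rightarrow> nat \<Rightarrow> ('v, 'f::comm_ring_1) epoly" where
  "T_hat E k S b l =
     (\<Sum>w\<in>{w. admissible_walk E k S b l w \<and> (\<forall>j>l. w j = undefined)}.
        \<Prod>j\<in>{1..l}. evar {w (j-1), w j})"

definition simple_cycle :: "'v set set \<Rightarrow> nat \<Rightarrow> (nat \<Rightarrow> 'v) \<Rightarrow> bool" where
  "simple_cycle E L w \<longleftrightarrow> L \<ge> 3 \<and> w L = w 0 \<and> (\<forall>j\<in>{1..L}. {w (j-1), w j} \<in> E) \<and>
     inj_on w {0..<L}"

definition good_cycle ::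
  "'v set set \<Rightarrow> nat \<Rightarrow> (nat \<Rightarrow> 'v set set) \<Rightarrow> 'v \<Rightarrow> nat \<Rightarrow> (nat \<Rightarrow> 'v) \<Rightarrow> bool" where
  "good_cycle E k S b L w \<longleftrightarrow> simple_cycle E L w \<and>
     (\<forall>i\<in>{1..k}. edges_in L w (S i) = 1) \<and>
     (\<exists>j\<in>{1..L}. {w (j-1), w j} \<in> S 1 \<and> b \<in> {w (j-1), w j})"

end

(*
  Each admissible walk of length l contributes a monomial of degree l, one variable per step.

  Rotating (and, if necessary, reflecting) a shortest good cycle so that it starts at b along
  its edge in S 1 gives an admissible closed walk c of length L.  An admissible walk with the
  monomial of c traverses each edge of the cycle exactly once and starts with the only S 1-edge
  of the cycle, so it follows c step by step: that monomial has coefficient 1.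

  For l < L, consider the loop erasure of a walk from its second vertex on: from a vertex, jump
  to its last visit.  Reversing the first loop met this way that is not a palindrome is an
  involution on admissible walks preserving the monomial, so in characteristic 2 the walks it
  moves cancel in pairs.  In a walk it fixes, every step off the loop-erased path lies in a
  palindromic loop and is traversed twice, so each S i-edge, traversed once, lies on the path.
  The first edge closes the path to a good cycle of length at most l, contradicting minimality.
*)
theory Submission
  imports Defs "HOL-Library.FuncSet" "HOL-Library.Disjoint_Sets"
begin

section \<open>Walk monomials\<close>

lemma prod_evar_eq_single:
  assumes "finite J"
  shows "(\<Prod>j\<in>J. evar (f j) :: ('v, 'f::comm_ring_1) epoly)
    = Poly_Mapping.single (\<Sum>j\<in>J. Poly_Mapping.single (f j) 1) 1"
  using assms by (induction J rule: finite_induct) (simp_all add: evar_def mult_single)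

lemma mon_degree_add: "mon_degree (m + m') = mon_degree m + mon_degree m'"
  unfolding mon_degree_def by (rule setsum_keys_plus_distrib) auto

lemma mon_degree_zero: "mon_degree 0 = 0"
  by (simp add: mon_degree_def)

lemma mon_degree_single: "mon_degree (Poly_Mapping.single x n) = n"
  by (simp add: mon_degree_def)

lemma mon_degree_sum_single:
  assumes "finite J"
  shows "mon_degree (\<Sum>j\<in>J. Poly_Mapping.single (f j) (1::nat)) = card J"
  using assms by (induction J rule: finite_induct)
    (simp_all add: mon_degree_zero mon_degree_add mon_degree_single)

lemma lookup_sum_single:
  assumes "finite J"
  shows "Poly_Mapping.lookup (\<Sum>j\<in>J. Poly_Mapping.single (f j) (1::nat)) x = card {j\<in>J. f j = x}"
  using assms
proof (induction J rule: finite_induct)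
  case (insert j J)
  have "{i\<in>insert j J. f i = x} = (if f j = x then insert j {i\<in>J. f i = x} else {i\<in>J. f i = x})"
    by auto
  then show ?case
    using insert by (simp add: lookup_add lookup_single when_def)
qed simp

lemma add_self_eq_0_char_2:
  assumes "CHAR('f::semiring_1) = 2"
  shows "(p :: 'a \<Rightarrow>\<^sub>0 'f) + p = 0"
proof -
  have "(2::'f) = 0"
    using of_nat_CHAR[where 'a='f] assms by simp
  then have "x + x = 0" for x :: 'f
    by (metis mult_2 mult_zero_left)
  then show ?thesis
    by (intro poly_mapping_eqI) (simp add: lookup_add)
qed

definition walk_monomial :: "nat \<Rightarrow> (nat \<Rightarrow> 'v) \<Rightarrow> 'v set \<Rightarrow>\<^sub>0 nat" where
  "walk_monomial l w = (\<Sum>j\<in>{1..l}. Poly_Mapping.single {w (j - 1), w j} 1)"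

definition edge_count :: "nat \<Rightarrow> (nat \<Rightarrow> 'v) \<Rightarrow> 'v set \<Rightarrow> nat" where
  "edge_count l w e = card {j\<in>{1..l}. {w (j - 1), w j} = e}"

lemma mon_degree_walk_monomial: "mon_degree (walk_monomial l w) = l"
  unfolding walk_monomial_def by (subst mon_degree_sum_single) simp_all

lemma lookup_walk_monomial: "Poly_Mapping.lookup (walk_monomial l w) e = edge_count l w e"
  unfolding walk_monomial_def edge_count_def by (intro lookup_sum_single) simp

definition admissible_walks ::
  "'v set set \<Rightarrow> nat \<Rightarrow> (nat \<Rightarrow> 'v set set) \<Rightarrow> 'v \<Rightarrow> nat \<Rightarrow> (nat \<Rightarrow> 'v) set" where
  "admissible_walks E k S b l = {w. admissible_walk E k S b l w \<and> (\<forall>j>l. w j = undefined)}"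

lemma admissible_walksD:
  assumes "w \<in> admissible_walks E k S b l"
  shows "w 0 = b" "w l = b" "\<forall>j\<in>{1..l}. {w (j - 1), w j} \<in> E" "{w 0, w 1} \<in> S 1"
    "\<forall>i\<in>{1..k}. edges_in l w (S i) = 1" "\<forall>j>l. w j = undefined"
  using assms unfolding admissible_walks_def admissible_walk_def closed_walk_def by auto

lemma T_hat_eq_sum_walk_monomial:
  "(T_hat E k S b l :: ('v, 'f::comm_ring_1) epoly)
    = (\<Sum>w\<in>admissible_walks E k S b l. Poly_Mapping.single (walk_monomial l w) 1)"
  unfolding T_hat_def admissible_walks_def walk_monomial_def by (simp add: prod_evar_eq_single)

lemma homogeneous_T_hat: "homogeneous_of_degree (T_hat E k S b l :: ('v, 'f::comm_ring_1) epoly) l"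
proof -
  have "Poly_Mapping.keys (T_hat E k S b l :: ('v, 'f) epoly)
      \<subseteq> (\<Union>w\<in>admissible_walks E k S b l.
            Poly_Mapping.keys (Poly_Mapping.single (walk_monomial l w) (1::'f)))"
    unfolding T_hat_eq_sum_walk_monomial by (rule keys_sum)
  also have "\<dots> \<subseteq> {m. mon_degree m = l}"
    by (auto simp: mon_degree_walk_monomial)
  finally show ?thesis
    unfolding homogeneous_of_degree_def by blast
qed

lemma finite_admissible_walks:
  assumes "simple_graph V E" "b \<in> V"
  shows "finite (admissible_walks E k S b l)"
proof (rule finite_subset)
  have vertices: "e \<subseteq> V" if "e \<in> E" for e
  proof -
    obtain u v where "u \<in> V" "v \<in> V" "e = {u, v}"
      using assms(1) \<open>e \<in> E\<close> unfolding simple_graph_def by blast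
    then show ?thesis by simp
  qed
  show "admissible_walks E k S b l \<subseteq> Pi\<^sub>E {0..l} (\<lambda>_. V)"
  proof
    fix w assume w: "w \<in> admissible_walks E k S b l"
    have "w j \<in> V" if "j \<le> l" for j
    proof (cases j)
      case 0
      then show ?thesis using admissible_walksD(1)[OF w] assms(2) by simp
    next
      case (Suc i)
      then have "j \<in> {1..l}" using that by simp
      then have "{w (j - 1), w j} \<in> E" using admissible_walksD(3)[OF w] by blast
      then show ?thesis using vertices by blast
    qed
    then show "w \<in> Pi\<^sub>E {0..l} (\<lambda>_. V)"
      using admissible_walksD(6)[OF w] by (auto simp: PiE_iff extensional_def)
  qed
  show "finite (Pi\<^sub>E {0..l} (\<lambda>_. V))"
    using assms(1) unfolding simple_graph_def by (intro finite_PiE) auto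
qed

lemma walk_reindex:
  assumes \<sigma>: "bij_betw \<sigma> {1..l} {1..l}"
    and edges: "\<forall>j\<in>{1..l}. {w' (j - 1), w' j} = {w (\<sigma> j - 1), w (\<sigma> j)}"
  shows walk_monomial_reindex: "walk_monomial l w' = walk_monomial l w"
    and edges_in_reindex: "edges_in l w' X = edges_in l w X"
    and walk_edges_reindex:
      "\<forall>j\<in>{1..l}. {w (j - 1), w j} \<in> E \<Longrightarrow> \<forall>j\<in>{1..l}. {w' (j - 1), w' j} \<in> E"
proof -
  have reindex: "(\<Sum>j\<in>{1..l}. g {w' (j - 1), w' j}) = (\<Sum>j\<in>{1..l}. g {w (j - 1), w j})"
    for g :: "'a set \<Rightarrow> 'b::comm_monoid_add"
    using sum.reindex_bij_betw[OF \<sigma>, of "\<lambda>j. g {w (j - 1), w j}"] edges by simp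
  show "walk_monomial l w' = walk_monomial l w"
    unfolding walk_monomial_def by (rule reindex)
  show "edges_in l w' X = edges_in l w X"
    using reindex[of "\<lambda>e. if e \<in> X then 1 else 0"]
    unfolding edges_in_def card_eq_sum sum.inter_filter[OF finite_atLeastAtMost] .
  show "\<forall>j\<in>{1..l}. {w' (j - 1), w' j} \<in> E" if "\<forall>j\<in>{1..l}. {w (j - 1), w j} \<in> E"
  proof
    fix j assume j: "j \<in> {1..l}"
    then have "\<sigma> j \<in> {1..l}" using bij_betwE[OF \<sigma>] by blast
    then show "{w' (j - 1), w' j} \<in> E" using that edges j by simp
  qed
qed

section \<open>Cycles and the coefficient of their monomial\<close>

lemma cycle_vertex_eq_iff:
  fixes c :: "nat \<Rightarrow> 'v"
  assumes "inj_on c {0..<L}" "c L = c 0" "x \<le> L" "y \<le> L"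
  shows "c x = c y \<longleftrightarrow> x mod L = y mod L"
proof (cases "L = 0")
  case False
  have "c x = c (x mod L)" "c y = c (y mod L)"
    using assms(2-4) by (auto simp: le_less)
  then show ?thesis
    using inj_on_eq_iff[OF assms(1)] False by simp
qed (use assms in simp)

lemma cycle_edges_distinct:
  fixes c :: "nat \<Rightarrow> 'v"
  assumes "inj_on c {0..<L}" "c L = c 0" "L \<ge> 3" "i \<in> {1..L}" "i' \<in> {1..L}"
    and "{c (i - 1), c i} = {c (i' - 1), c i'}"
  shows "i = i'"
proof -
  have mod_L: "x mod L = (if x = L then 0 else x)" if "x \<le> L" for x
    using that by auto
  have lt: "i - 1 < L" "i' - 1 < L" "i \<le> L" "i' \<le> L" "1 \<le> i" "1 \<le> i'"
    using assms(4,5) by auto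
  note eq_iff = cycle_vertex_eq_iff[OF assms(1,2)]
  consider "c (i - 1) = c (i' - 1)" "c i = c i'" | "c (i - 1) = c i'" "c i = c (i' - 1)"
    using assms(6) by (auto simp: doubleton_eq_iff)
  then show ?thesis
  proof cases
    case 1
    then show ?thesis
      using eq_iff[of "i - 1" "i' - 1"] lt by auto
  next
    case 2
    then have "i - 1 = i' mod L" "i mod L = i' - 1"
      using eq_iff[of "i - 1" i'] eq_iff[of i "i' - 1"] lt by auto
    then show ?thesis
      using mod_L[of i] mod_L[of i'] lt assms(3) by (auto split: if_splits)
  qed
qed

lemma eq_if_add_mod_eq:
  fixes x y r L :: nat
  assumes "x < L" "y < L" "r \<le> L" "(x + r) mod L = (y + r) mod L"
  shows "x = y"
proof -
  have "z = ((z + r) mod L + (L - r)) mod L" if "z < L" for z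
    using that assms(3) mod_add_left_eq[of "z + r" L "L - r"] by simp
  then show ?thesis
    using assms(1,2,4) by metis
qed

lemma bij_betw_rotate_index:
  fixes r L :: nat
  assumes "r < L"
  shows "bij_betw (\<lambda>j. (j - 1 + r) mod L + 1) {1..L} {1..L}"
proof -
  have "inj_on (\<lambda>j. (j - 1 + r) mod L + 1) {1..L}"
  proof (rule inj_onI)
    fix i j assume ij: "i \<in> {1..L}" "j \<in> {1..L}" "(i - 1 + r) mod L + 1 = (j - 1 + r) mod L + 1"
    moreover have "i - 1 < L" "j - 1 < L"
      using ij by auto
    ultimately have "i - 1 = j - 1"
      using assms eq_if_add_mod_eq[of "i - 1" L "j - 1" r] by simp
    then show "i = j"
      using ij by auto
  qed
  moreover have "(\<lambda>j. (j - 1 + r) mod L + 1) ` {1..L} \<subseteq> {1..L}"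
    using assms by (auto simp: Suc_le_eq)
  ultimately show ?thesis
    unfolding bij_betw_def using endo_inj_surj[OF finite_atLeastAtMost] by blast
qed

lemma simple_cycle_rotate:
  assumes q: "simple_cycle E L q" and r: "r < L"
  defines "q' \<equiv> \<lambda>x. if x \<le> L then q ((x + r) mod L) else undefined"
  shows "simple_cycle E L q'" "q' 0 = q r" "q' 1 = q (Suc r)"
    "edges_in L q' X = edges_in L q X" "\<forall>x>L. q' x = undefined"
proof -
  have L3: "L \<ge> 3" and qL: "q L = q 0" and qE: "\<forall>j\<in>{1..L}. {q (j - 1), q j} \<in> E"
    and inj: "inj_on q {0..<L}"
    using q unfolding simple_cycle_def by auto
  have q_mod: "q (x mod L) = q x" if "x \<le> L" for x
    using that qL by (cases "x = L") auto
  define \<sigma> where "\<sigma> j = (j - 1 + r) mod L + 1" for j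
  have \<sigma>: "bij_betw \<sigma> {1..L} {1..L}"
    unfolding \<sigma>_def using r by (rule bij_betw_rotate_index)
  have edges: "\<forall>j\<in>{1..L}. {q' (j - 1), q' j} = {q (\<sigma> j - 1), q (\<sigma> j)}"
  proof
    fix j assume j: "j \<in> {1..L}"
    have "\<sigma> j mod L = (j + r) mod L"
      using j by (simp add: \<sigma>_def mod_Suc_eq)
    then have "q (\<sigma> j) = q ((j + r) mod L)"
      using q_mod[of "\<sigma> j"] L3 by (simp add: \<sigma>_def Suc_le_eq)
    moreover have "j - 1 \<le> L"
      using j by auto
    ultimately show "{q' (j - 1), q' j} = {q (\<sigma> j - 1), q (\<sigma> j)}"
      using j by (simp add: q'_def \<sigma>_def)
  qed
  show "edges_in L q' X = edges_in L q X"
    by (rule edges_in_reindex[OF \<sigma> edges])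
  have "inj_on q' {0..<L}"
  proof (rule inj_onI)
    fix x y assume xy: "x \<in> {0..<L}" "y \<in> {0..<L}" "q' x = q' y"
    then have "q ((x + r) mod L) = q ((y + r) mod L)"
      by (simp add: q'_def)
    then have "(x + r) mod L = (y + r) mod L"
      using inj_on_eq_iff[OF inj] L3 by simp
    then show "x = y"
      using xy r eq_if_add_mod_eq[of x L y r] by simp
  qed
  moreover have "q' L = q' 0"
    by (simp add: q'_def)
  ultimately show "simple_cycle E L q'"
    using L3 walk_edges_reindex[OF \<sigma> edges qE] unfolding simple_cycle_def by blast
  show "q' 0 = q r" "q' 1 = q (Suc r)"
    using r q_mod[of "Suc r"] L3 by (simp_all add: q'_def)
  show "\<forall>x>L. q' x = undefined"
    by (simp add: q'_def)
qed

lemma simple_cycle_reflect: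
  assumes q: "simple_cycle E L q"
  shows "simple_cycle E L (\<lambda>x. q (L - x))" "edges_in L (\<lambda>x. q (L - x)) X = edges_in L q X"
proof -
  have L3: "L \<ge> 3" and qL: "q L = q 0" and qE: "\<forall>j\<in>{1..L}. {q (j - 1), q j} \<in> E"
    and inj: "inj_on q {0..<L}"
    using q unfolding simple_cycle_def by auto
  define \<sigma> where "\<sigma> i = L + 1 - i" for i
  have \<sigma>: "bij_betw \<sigma> {1..L} {1..L}"
    by (rule bij_betw_byWitness[where f' = \<sigma>]) (auto simp: \<sigma>_def)
  have edges: "\<forall>i\<in>{1..L}. {q (L - (i - 1)), q (L - i)} = {q (\<sigma> i - 1), q (\<sigma> i)}"
  proof
    fix i assume "i \<in> {1..L}"
    then have "L - (i - 1) = \<sigma> i" "L - i = \<sigma> i - 1"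
      by (auto simp: \<sigma>_def)
    then show "{q (L - (i - 1)), q (L - i)} = {q (\<sigma> i - 1), q (\<sigma> i)}"
      by (simp add: insert_commute)
  qed
  show "edges_in L (\<lambda>x. q (L - x)) X = edges_in L q X"
    using edges_in_reindex[OF \<sigma> edges] by simp
  have "inj_on (\<lambda>x. q (L - x)) {0..<L}"
  proof (rule inj_onI)
    fix x y assume "x \<in> {0..<L}" "y \<in> {0..<L}" "q (L - x) = q (L - y)"
    then show "x = y"
      using cycle_vertex_eq_iff[OF inj qL, of "L - x" "L - y"]
      by (cases "x = 0"; cases "y = 0") auto
  qed
  then show "simple_cycle E L (\<lambda>x. q (L - x))"
    using L3 qL walk_edges_reindex[OF \<sigma> edges qE] by (simp add: simple_cycle_def)
qed

lemma simple_cycle_admissible_walk: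
  assumes q: "simple_cycle E L q" and r: "r < L" "q r = b" "{q r, q (Suc r)} \<in> S 1"
    and once: "\<forall>i\<in>{1..k}. edges_in L q (S i) = 1"
  obtains w where "w \<in> admissible_walks E k S b L" "inj_on w {0..<L}"
proof -
  define w where "w x = (if x \<le> L then q ((x + r) mod L) else undefined)" for x
  note rot = simple_cycle_rotate[OF q r(1), folded w_def]
  have cycle: "w L = w 0" "\<forall>j\<in>{1..L}. {w (j - 1), w j} \<in> E" "inj_on w {0..<L}"
    using rot(1) unfolding simple_cycle_def by auto
  have "w 0 = b" "{w 0, w 1} \<in> S 1" "\<forall>i\<in>{1..k}. edges_in L w (S i) = 1"
    using rot(2-4) r once by simp_all
  then have "w \<in> admissible_walks E k S b L"
    using cycle rot(5) unfolding admissible_walks_def admissible_walk_def closed_walk_def by simp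
  then show ?thesis
    using cycle(3) that by blast
qed

lemma good_cycle_admissible_walk:
  assumes "good_cycle E k S b L q"
  obtains w where "w \<in> admissible_walks E k S b L" "inj_on w {0..<L}"
proof -
  have q: "simple_cycle E L q" and once: "\<forall>i\<in>{1..k}. edges_in L q (S i) = 1"
    using assms unfolding good_cycle_def by auto
  obtain j where j: "j \<in> {1..L}" "{q (j - 1), q j} \<in> S 1" "b \<in> {q (j - 1), q j}"
    using assms unfolding good_cycle_def by blast
  show ?thesis
  proof (cases "b = q (j - 1)")
    case True
    have "j - 1 < L" "Suc (j - 1) = j"
      using j(1) by auto
    then show ?thesis
      using simple_cycle_admissible_walk[OF q _ True[symmetric] _ once] j(2) that by auto
  next
    case False
    note refl = simple_cycle_reflect[OF q]
    have "L - j < L" "L - (L - j) = j" "L - Suc (L - j) = j - 1"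
      using j(1) by auto
    moreover have "b = q j"
      using j(3) False by auto
    moreover have "\<forall>i\<in>{1..k}. edges_in L (\<lambda>x. q (L - x)) (S i) = 1"
      using once refl(2) by simp
    ultimately show ?thesis
      using simple_cycle_admissible_walk[OF refl(1), of "L - j" b S k] j(2) that
      by (simp add: insert_commute) blast
  qed
qed

lemma edge_count_pos_iff: "0 < edge_count l w e \<longleftrightarrow> (\<exists>j\<in>{1..l}. {w (j - 1), w j} = e)"
  unfolding edge_count_def by (auto simp: card_gt_0_iff)

lemma edge_count_cycle_edge:
  fixes c :: "nat \<Rightarrow> 'v"
  assumes "inj_on c {0..<L}" "c L = c 0" "L \<ge> 3" "i \<in> {1..L}"
  shows "edge_count L c {c (i - 1), c i} = 1"
proof -
  have "{x\<in>{1..L}. {c (x - 1), c x} = {c (i - 1), c i}} = {i}"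
    using cycle_edges_distinct[OF assms(1-3) _ assms(4)] assms(4) by auto
  then show ?thesis
    by (simp add: edge_count_def)
qed

lemma walk_step_along_cycle:
  assumes inj: "inj_on c {0..<L}" "c L = c 0" "L \<ge> 3"
    and count: "\<And>e. edge_count L w e = edge_count L c e"
    and i: "1 \<le> i" "i < L" and prev: "w (i - 1) = c (i - 1)" "w i = c i"
  shows "w (Suc i) = c (Suc i)"
proof -
  note eq_iff = cycle_vertex_eq_iff[OF inj(1,2)]
  have "0 < edge_count L w {w i, w (Suc i)}"
    unfolding edge_count_pos_iff using i by (intro bexI[of _ "Suc i"]) auto
  then obtain i' where i': "i' \<in> {1..L}" "{c (i' - 1), c i'} = {c i, w (Suc i)}"
    using count prev by (auto simp: edge_count_pos_iff)
  \<comment> \<open>The step of w from c i is a cycle edge at c i. It cannot lead back to c (i - 1),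
    since w has already used that edge, which occurs only once in the cycle.\<close>
  consider "c (i' - 1) = c i" "c i' = w (Suc i)" | "c i' = c i" "c (i' - 1) = w (Suc i)"
    using i'(2) by (auto simp: doubleton_eq_iff)
  then show ?thesis
  proof cases
    case 1
    then have "(i' - 1) mod L = i mod L"
      using eq_iff[of "i' - 1" i] i i' by auto
    then have "i' - 1 = i"
      using i i' by auto
    then show ?thesis
      using 1 i by auto
  next
    case 2
    then have "i' mod L = i mod L"
      using eq_iff[of i' i] i i' by auto
    then have "i' = i"
      using i i' by (cases "i' = L") auto
    then have "{i, Suc i} \<subseteq> {x\<in>{1..L}. {w (x - 1), w x} = {c (i - 1), c i}}"
      using 2 prev i by (auto simp: insert_commute)
    then have "card {i, Suc i} \<le> edge_count L w {c (i - 1), c i}"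
      unfolding edge_count_def by (intro card_mono) auto
    moreover have "edge_count L c {c (i - 1), c i} = 1"
      using edge_count_cycle_edge[OF inj, of i] i by simp
    ultimately show ?thesis
      using count by simp
  qed
qed

lemma walk_follows_cycle:
  assumes cycle: "inj_on c {0..<L}" "c L = c 0" "L \<ge> 3"
    and count: "\<And>e. edge_count L w e = edge_count L c e"
    and start: "w 0 = c 0" "w 1 = c 1"
  shows "j \<le> L \<Longrightarrow> w j = c j"
proof (induction j rule: less_induct)
  case (less j)
  show ?case
  proof (cases "j \<le> 1")
    case True
    then show ?thesis
      using start by (cases j) auto
  next
    case False
    then obtain i where "j = Suc i" "1 \<le> i" "i < L"
      using less.prems by (cases j) auto
    then show ?thesis
      using walk_step_along_cycle[OF cycle count] less by simp
  qed
qed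

lemma admissible_walk_eq_cycle_walk:
  assumes k: "k \<ge> 1" and L3: "L \<ge> 3"
    and w: "w \<in> admissible_walks E k S b L" and c: "c \<in> admissible_walks E k S b L"
    and inj: "inj_on c {0..<L}"
    and same: "walk_monomial L w = walk_monomial L c"
  shows "w = c"
proof -
  have cycle: "c L = c 0"
    using admissible_walksD(1,2)[OF c] by simp
  have count: "edge_count L w e = edge_count L c e" for e
    by (simp only: lookup_walk_monomial[symmetric] same)
  have "edges_in L c (S 1) = 1"
    using admissible_walksD(5)[OF c] k by simp
  then obtain x where x: "{j\<in>{1..L}. {c (j - 1), c j} \<in> S 1} = {x}"
    unfolding edges_in_def by (rule card_1_singletonE)
  moreover have "1 \<in> {j\<in>{1..L}. {c (j - 1), c j} \<in> S 1}"
    using admissible_walksD(4)[OF c] L3 by simp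
  ultimately have first_in_S1: "{j\<in>{1..L}. {c (j - 1), c j} \<in> S 1} = {1}"
    by simp
  have "0 < edge_count L w {w 0, w 1}"
    unfolding edge_count_pos_iff using L3 by (intro bexI[of _ 1]) auto
  then obtain i where i: "i \<in> {1..L}" "{c (i - 1), c i} = {w 0, w 1}"
    using count by (auto simp: edge_count_pos_iff)
  then have "i = 1"
    using first_in_S1 admissible_walksD(4)[OF w] by auto
  moreover have "c 1 \<noteq> c 0"
    using inj L3 by (auto dest: inj_onD)
  ultimately have "w 1 = c 1"
    using i admissible_walksD(1)[OF w] admissible_walksD(1)[OF c] by (auto simp: doubleton_eq_iff)
  then have "w j = c j" if "j \<le> L" for j
    using walk_follows_cycle[OF inj cycle L3 count] that
      admissible_walksD(1)[OF w] admissible_walksD(1)[OF c] by simp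
  then show ?thesis
    using admissible_walksD(6)[OF w] admissible_walksD(6)[OF c] by (metis not_le ext)
qed

lemma lookup_T_hat_cycle_walk:
  assumes "simple_graph V E" "b \<in> V" "k \<ge> 1" "L \<ge> 3"
    and c: "c \<in> admissible_walks E k S b L" "inj_on c {0..<L}"
  shows "Poly_Mapping.lookup (T_hat E k S b L :: ('v, 'f::comm_ring_1) epoly) (walk_monomial L c)
    = 1"
proof -
  have "Poly_Mapping.lookup (T_hat E k S b L :: ('v, 'f) epoly) (walk_monomial L c)
      = (\<Sum>w\<in>admissible_walks E k S b L. if w = c then 1 else 0)"
  proof (unfold T_hat_eq_sum_walk_monomial lookup_sum, intro sum.cong refl)
    fix w assume "w \<in> admissible_walks E k S b L"
    then have "walk_monomial L w = walk_monomial L c \<longleftrightarrow> w = c"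
      using admissible_walk_eq_cycle_walk[OF assms(3,4) _ c] by blast
    then show "Poly_Mapping.lookup (Poly_Mapping.single (walk_monomial L w) (1::'f))
        (walk_monomial L c) = (if w = c then 1 else 0)"
      by (simp add: lookup_single when_def)
  qed
  also have "\<dots> = 1"
    using finite_admissible_walks[OF assms(1,2)] c(1) by simp
  finally show ?thesis .
qed

lemma T_hat_nonzero_if_good_cycle:
  assumes "simple_graph V E" "b \<in> V" "k \<ge> 1" "good_cycle E k S b L q"
  shows "(T_hat E k S b L :: ('v, 'f::comm_ring_1) epoly) \<noteq> 0"
proof -
  obtain c where c: "c \<in> admissible_walks E k S b L" "inj_on c {0..<L}"
    using good_cycle_admissible_walk[OF assms(4)] by blast
  have "L \<ge> 3"
    using assms(4) by (simp add: good_cycle_def simple_cycle_def)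
  then have "Poly_Mapping.lookup (T_hat E k S b L :: ('v, 'f) epoly) (walk_monomial L c) = 1"
    using lookup_T_hat_cycle_walk[OF assms(1-3) _ c] by blast
  then show ?thesis
    by auto
qed

section \<open>Reversing the first non-palindromic loop\<close>

definition last_visit :: "(nat \<Rightarrow> 'v) \<Rightarrow> nat \<Rightarrow> nat \<Rightarrow> nat" where
  "last_visit w l a = (GREATEST t. t \<le> l \<and> w t = w a)"

lemma
  assumes "a \<le> l"
  shows last_visit_ge: "a \<le> last_visit w l a"
    and last_visit_le: "last_visit w l a \<le> l"
    and last_visit_same: "w (last_visit w l a) = w a"
    and last_visit_greatest: "last_visit w l a < t \<Longrightarrow> t \<le> l \<Longrightarrow> w t \<noteq> w a"
proof -
  let ?P = "\<lambda>t. t \<le> l \<and> w t = w a"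
  have visit: "?P a" and bound: "\<And>t. ?P t \<Longrightarrow> t \<le> l"
    using assms by simp_all
  show "a \<le> last_visit w l a"
    unfolding last_visit_def by (rule Greatest_le_nat[of ?P, OF visit bound])
  show "last_visit w l a \<le> l" "w (last_visit w l a) = w a"
    using GreatestI_nat[of ?P, OF visit bound] unfolding last_visit_def by auto
  show "w t \<noteq> w a" if "last_visit w l a < t" "t \<le> l"
    using that Greatest_le_nat[of ?P t, OF _ bound] unfolding last_visit_def by auto
qed

lemma last_visit_eqI:
  assumes "t \<le> l" "w t = w a" "\<And>t'. t < t' \<Longrightarrow> t' \<le> l \<Longrightarrow> w t' \<noteq> w a"
  shows "last_visit w l a = t"
  unfolding last_visit_def
  by (rule Greatest_equality) (use assms in \<open>auto simp: not_less[symmetric]\<close>)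

definition reverse_segment :: "nat \<Rightarrow> nat \<Rightarrow> (nat \<Rightarrow> 'v) \<Rightarrow> nat \<Rightarrow> 'v" where
  "reverse_segment a T w j = (if a \<le> j \<and> j \<le> T then w (a + T - j) else w j)"

lemma reverse_segment_reverse_segment [simp]: "reverse_segment a T (reverse_segment a T w) = w"
  by (rule ext) (auto simp: reverse_segment_def)

lemma reverse_segment_eq_iff: "reverse_segment a T w' = w \<longleftrightarrow> w' = reverse_segment a T w"
  by (metis reverse_segment_reverse_segment)

text \<open>The loop at position a is the closed subwalk from a to the last visit of w a; it is a
  palindrome iff reversing it leaves w unchanged.  The scan jumps over palindromic loops.\<close>
function first_nonpalindromic_loop :: "(nat \<Rightarrow> 'v) \<Rightarrow> nat \<Rightarrow> nat \<Rightarrow> (nat \<times> nat) option" where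
  "first_nonpalindromic_loop w l a =
    (if l \<le> a then None
     else if reverse_segment a (last_visit w l a) w \<noteq> w then Some (a, last_visit w l a)
     else first_nonpalindromic_loop w l (Suc (last_visit w l a)))"
  by pat_completeness auto
termination
proof (relation "measure (\<lambda>(w, l, a). l - a)")
  fix w :: "nat \<Rightarrow> 'v" and l a :: nat
  assume "\<not> l \<le> a"
  then show "((w, l, Suc (last_visit w l a)), w, l, a) \<in> measure (\<lambda>(w, l, a). l - a)"
    using last_visit_ge[of a l w] last_visit_le[of a l w] by auto
qed simp

declare first_nonpalindromic_loop.simps [simp del]

lemma first_nonpalindromic_loop_SomeD:
  "first_nonpalindromic_loop w l c = Some (a, T) \<Longrightarrow>
    c \<le> a \<and> a < l \<and> T = last_visit w l a \<and> reverse_segment a T w \<noteq> w"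
proof (induction w l c rule: first_nonpalindromic_loop.induct)
  case (1 w l c)
  have cl: "c < l"
    using 1(2) by (subst (asm) first_nonpalindromic_loop.simps) (auto split: if_splits)
  show ?case
  proof (cases "reverse_segment c (last_visit w l c) w = w")
    case True
    then have "first_nonpalindromic_loop w l (Suc (last_visit w l c)) = Some (a, T)"
      using 1(2) cl by (subst (asm) first_nonpalindromic_loop.simps) simp
    then show ?thesis
      using 1(1) True cl last_visit_ge[of c l w] by fastforce
  qed (use 1(2) cl in \<open>subst (asm) first_nonpalindromic_loop.simps, auto\<close>)
qed

lemma last_visit_reverse_segment_loop:
  assumes "c \<le> l"
  shows "last_visit (reverse_segment c (last_visit w l c) w) l c = last_visit w l c"
proof (rule last_visit_eqI)
  let ?T = "last_visit w l c"
  show "?T \<le> l" "reverse_segment c ?T w ?T = reverse_segment c ?T w c"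
    using assms last_visit_ge[of c l w] last_visit_le[of c l w] last_visit_same[of c l w]
    by (simp_all add: reverse_segment_def)
  show "reverse_segment c ?T w t \<noteq> reverse_segment c ?T w c" if "?T < t" "t \<le> l" for t
    using that assms last_visit_ge[of c l w] last_visit_same[of c l w] last_visit_greatest[of c l w]
    by (simp add: reverse_segment_def)
qed

lemma last_visit_reverse_segment_later:
  assumes "c \<le> l" "last_visit w l c < a" "T \<le> l"
  shows "last_visit (reverse_segment a T w) l c = last_visit w l c"
proof (rule last_visit_eqI)
  let ?T = "last_visit w l c" and ?w = "reverse_segment a T w"
  have lv: "c \<le> ?T" "?T \<le> l" "w ?T = w c" "\<And>t. ?T < t \<Longrightarrow> t \<le> l \<Longrightarrow> w t \<noteq> w c"
    using last_visit_ge[of c l w] last_visit_le[of c l w] last_visit_same[of c l w]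
      last_visit_greatest[of c l w] assms(1) by auto
  then have wc: "?w c = w c" "?w ?T = w c"
    using assms(2) by (simp_all add: reverse_segment_def)
  then show "?T \<le> l" "?w ?T = ?w c"
    using lv by simp_all
  show "?w t \<noteq> ?w c" if "?T < t" "t \<le> l" for t
  proof (cases "a \<le> t \<and> t \<le> T")
    case True
    then have "?T < a + T - t" "a + T - t \<le> l"
      using assms(2,3) by auto
    then show ?thesis
      using True lv(4)[of "a + T - t"] wc by (simp add: reverse_segment_def)
  next
    case False
    then show ?thesis
      using that lv(4) wc by (auto simp: reverse_segment_def)
  qed
qed

lemma reverse_segment_commute:
  assumes "T' < a"
  shows "reverse_segment c T' (reverse_segment a T w)
    = reverse_segment a T (reverse_segment c T' w)"
  unfolding fun_eq_iff reverse_segment_def using assms by auto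

lemma first_nonpalindromic_loop_reverse_segment:
  "first_nonpalindromic_loop w l c = Some (a, T) \<Longrightarrow>
    first_nonpalindromic_loop (reverse_segment a T w) l c = Some (a, T)"
proof (induction w l c rule: first_nonpalindromic_loop.induct)
  case (1 w l c)
  let ?T = "last_visit w l c" and ?w = "reverse_segment a T w"
  have cl: "c < l"
    using 1(2) by (subst (asm) first_nonpalindromic_loop.simps) (auto split: if_splits)
  show ?case
  proof (cases "reverse_segment c ?T w = w")
    case False
    then have loop: "a = c" "T = ?T"
      using 1(2) cl by (subst (asm) first_nonpalindromic_loop.simps, auto)+
    then have "last_visit ?w l c = ?T"
      using last_visit_reverse_segment_loop[of c l w] cl by simp
    moreover have "reverse_segment c ?T ?w \<noteq> ?w"
      using False loop by (simp add: reverse_segment_eq_iff)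
    ultimately show ?thesis
      using loop cl by (subst first_nonpalindromic_loop.simps) simp
  next
    case True
    then have rec: "first_nonpalindromic_loop w l (Suc ?T) = Some (a, T)"
      using 1(2) cl by (subst (asm) first_nonpalindromic_loop.simps) simp
    then have later: "?T < a" "T \<le> l"
      using first_nonpalindromic_loop_SomeD[OF rec] last_visit_le[of a l w] by auto
    then have "last_visit ?w l c = ?T"
      using last_visit_reverse_segment_later[of c l w a T] cl by simp
    moreover have "reverse_segment c ?T ?w = ?w"
      using reverse_segment_commute[OF later(1), of c T w] True by simp
    moreover have "first_nonpalindromic_loop ?w l (Suc ?T) = Some (a, T)"
      using 1(1) True cl rec by simp
    ultimately show ?thesis
      using cl by (subst first_nonpalindromic_loop.simps) simp
  qed
qed

definition reflect_index :: "nat \<Rightarrow> nat \<Rightarrow> nat \<Rightarrow> nat" where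
  "reflect_index a T j = (if a < j \<and> j \<le> T then a + T + 1 - j else j)"

lemma bij_betw_reflect_index:
  assumes "a \<le> T" "T \<le> l"
  shows "bij_betw (reflect_index a T) {1..l} {1..l}"
  by (rule bij_betw_byWitness[where f' = "reflect_index a T"])
    (use assms in \<open>auto simp: reflect_index_def\<close>)

lemma reverse_segment_edge:
  assumes "1 \<le> a" "a \<le> T" "w a = w T" "1 \<le> j"
  shows "{reverse_segment a T w (j - 1), reverse_segment a T w j}
    = {w (reflect_index a T j - 1), w (reflect_index a T j)}"
proof (cases "a < j \<and> j \<le> T")
  case True
  then have "reverse_segment a T w (j - 1) = w (a + T + 1 - j)"
    "reverse_segment a T w j = w (a + T - j)"
    "reflect_index a T j = a + T + 1 - j" "a + T + 1 - j - 1 = a + T - j"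
    by (auto simp: reverse_segment_def reflect_index_def)
  then show ?thesis
    by (simp add: insert_commute)
next
  case False
  then have "reflect_index a T j = j"
    unfolding reflect_index_def by auto
  moreover have "reverse_segment a T w j = w j"
    using False assms by (auto simp: reverse_segment_def)
  moreover have "reverse_segment a T w (j - 1) = w (j - 1)"
    using False assms by (cases "j - 1 = T") (auto simp: reverse_segment_def)
  ultimately show ?thesis
    by simp
qed

lemma reverse_first_loop:
  assumes loop: "first_nonpalindromic_loop w l 1 = Some (a, T)"
    and w: "w \<in> admissible_walks E k S b l"
  shows "reverse_segment a T w \<in> admissible_walks E k S b l"
    and "walk_monomial l (reverse_segment a T w) = walk_monomial l w"
proof -
  let ?w = "reverse_segment a T w"
  from first_nonpalindromic_loop_SomeD[OF loop]
  have a1: "1 \<le> a" and al: "a < l" and T: "T = last_visit w l a"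
    by blast+
  have a: "a \<le> T" "T \<le> l" "w T = w a"
    unfolding T using al last_visit_ge[of a l w] last_visit_le[of a l w] last_visit_same[of a l w]
    by simp_all
  have \<sigma>: "bij_betw (reflect_index a T) {1..l} {1..l}"
    using a by (intro bij_betw_reflect_index)
  have edges: "\<forall>j\<in>{1..l}.
      {?w (j - 1), ?w j} = {w (reflect_index a T j - 1), w (reflect_index a T j)}"
    using a1 a by (intro ballI reverse_segment_edge) auto
  show "walk_monomial l ?w = walk_monomial l w"
    by (rule walk_monomial_reindex[OF \<sigma> edges])
  have "1 \<in> {1..l}"
    using al by simp
  then have "{?w (1 - 1), ?w 1} = {w (reflect_index a T 1 - 1), w (reflect_index a T 1)}"
    using edges by blast
  moreover have "reflect_index a T 1 = 1"
    using a1 by (simp add: reflect_index_def)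
  ultimately have first_edge: "{?w 0, ?w 1} \<in> S 1"
    using admissible_walksD(4)[OF w] by simp
  have ends: "?w 0 = b" "?w l = b" "\<forall>j>l. ?w j = undefined"
    using a1 a admissible_walksD(1,2,6)[OF w] by (auto simp: reverse_segment_def)
  have once: "\<forall>i\<in>{1..k}. edges_in l ?w (S i) = 1"
    using admissible_walksD(5)[OF w] edges_in_reindex[OF \<sigma> edges] by simp
  have steps: "\<forall>j\<in>{1..l}. {?w (j - 1), ?w j} \<in> E"
    by (rule walk_edges_reindex[OF \<sigma> edges admissible_walksD(3)[OF w]])
  show "?w \<in> admissible_walks E k S b l"
    unfolding admissible_walks_def admissible_walk_def closed_walk_def mem_Collect_eq
    by (intro conjI first_edge ends once steps)
qed

definition loop_reversal :: "nat \<Rightarrow> (nat \<Rightarrow> 'v) \<Rightarrow> nat \<Rightarrow> 'v" where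
  "loop_reversal l w =
    (case first_nonpalindromic_loop w l 1 of None \<Rightarrow> w | Some (a, T) \<Rightarrow> reverse_segment a T w)"

lemma loop_reversal_loop_reversal: "loop_reversal l (loop_reversal l w) = w"
proof (cases "first_nonpalindromic_loop w l 1")
  case (Some p)
  then obtain a T where loop: "first_nonpalindromic_loop w l 1 = Some (a, T)"
    by (cases p) simp
  then have "first_nonpalindromic_loop (reverse_segment a T w) l 1 = Some (a, T)"
    by (rule first_nonpalindromic_loop_reverse_segment)
  then show ?thesis
    using loop by (simp add: loop_reversal_def)
qed (simp add: loop_reversal_def)

lemma loop_reversal_eq_iff: "loop_reversal l w = w \<longleftrightarrow> first_nonpalindromic_loop w l 1 = None"
proof (cases "first_nonpalindromic_loop w l 1")
  case (Some p)
  then obtain a T where loop: "first_nonpalindromic_loop w l 1 = Some (a, T)"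
    by (cases p) simp
  then have "reverse_segment a T w \<noteq> w"
    using first_nonpalindromic_loop_SomeD by blast
  then show ?thesis
    using loop by (simp add: loop_reversal_def)
qed (simp add: loop_reversal_def)

lemma
  assumes "w \<in> admissible_walks E k S b l"
  shows loop_reversal_in_admissible_walks: "loop_reversal l w \<in> admissible_walks E k S b l"
    and walk_monomial_loop_reversal: "walk_monomial l (loop_reversal l w) = walk_monomial l w"
proof -
  have "loop_reversal l w \<in> admissible_walks E k S b l
    \<and> walk_monomial l (loop_reversal l w) = walk_monomial l w"
  proof (cases "first_nonpalindromic_loop w l 1")
    case None
    then show ?thesis
      using assms by (simp add: loop_reversal_def)
  next
    case (Some p)
    then obtain a T where loop: "first_nonpalindromic_loop w l 1 = Some (a, T)"
      by (cases p) simp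
    then show ?thesis
      using reverse_first_loop[OF loop assms] by (simp add: loop_reversal_def)
  qed
  then show "loop_reversal l w \<in> admissible_walks E k S b l"
    "walk_monomial l (loop_reversal l w) = walk_monomial l w"
    by simp_all
qed

section \<open>Walks fixed by the loop reversal\<close>

lemma symmetric_loop_step_twin:
  assumes sym: "reverse_segment c T w = w" and j: "c < j" "j \<le> T" and step: "w (j - 1) \<noteq> w j"
  shows "\<exists>j'\<in>{c<..T}. j' \<noteq> j \<and> {w (j' - 1), w j'} = {w (j - 1), w j}"
proof (intro bexI conjI)
  have mirror: "w i = w (c + T - i)" if "c \<le> i" "i \<le> T" for i
    using fun_cong[OF sym, of i] that by (simp add: reverse_segment_def)
  have "w (c + T + 1 - j - 1) = w j" "w (c + T + 1 - j) = w (j - 1)"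
    using mirror[of j] mirror[of "j - 1"] j by (simp_all add: Suc_diff_le)
  then show "{w (c + T + 1 - j - 1), w (c + T + 1 - j)} = {w (j - 1), w j}"
    by (simp add: insert_commute)
  show "c + T + 1 - j \<noteq> j"
  proof
    assume "c + T + 1 - j = j"
    then have "c + T - j = j - 1"
      by linarith
    then show False
      using mirror[of j] j step by simp
  qed
  show "c + T + 1 - j \<in> {c<..T}"
    using j by auto
qed

text \<open>Step j of a walk w is the edge from w (j - 1) to w j.  The steps of p are distinct steps
  of w after position c, and every other step of w after c is traversed at least twice after c.\<close>
definition steps_embed :: "(nat \<Rightarrow> 'v) \<Rightarrow> nat \<Rightarrow> nat \<Rightarrow> nat \<Rightarrow> (nat \<Rightarrow> 'v) \<Rightarrow> (nat \<Rightarrow> nat) \<Rightarrow> bool" where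
  "steps_embed w c l n p h \<longleftrightarrow>
     inj_on h {..<n} \<and> h ` {..<n} \<subseteq> {c<..l} \<and>
     (\<forall>i<n. {p i, p (Suc i)} = {w (h i - 1), w (h i)}) \<and>
     (\<forall>j\<in>{c<..l} - h ` {..<n}. \<exists>j'\<in>{c<..l}. j' \<noteq> j \<and> {w (j' - 1), w j'} = {w (j - 1), w j})"

definition loop_erased_path ::
  "(nat \<Rightarrow> 'v) \<Rightarrow> nat \<Rightarrow> nat \<Rightarrow> nat \<Rightarrow> (nat \<Rightarrow> 'v) \<Rightarrow> (nat \<Rightarrow> nat) \<Rightarrow> bool" where
  "loop_erased_path w c l n p h \<longleftrightarrow>
     p 0 = w c \<and> p n = w l \<and> inj_on p {..n} \<and> p ` {..n} \<subseteq> w ` {c..l} \<and> steps_embed w c l n p h"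

lemma inj_on_case_nat: "inj_on (case_nat x f) (insert 0 (Suc ` A)) \<longleftrightarrow> inj_on f A \<and> x \<notin> f ` A"
  by (auto simp: inj_on_def)

lemma steps_embed_Cons:
  assumes path: "steps_embed w (Suc T) l n p h" "p 0 = w (Suc T)"
    and loop: "c \<le> T" "T < l" "w T = w c"
    and twins: "\<forall>j\<in>{c<..T}. \<exists>j'\<in>{c<..T}. j' \<noteq> j \<and> {w (j' - 1), w j'} = {w (j - 1), w j}"
  shows "steps_embed w c l (Suc n) (case_nat (w c) p) (case_nat (Suc T) h)"
proof -
  have inj: "inj_on h {..<n}" and range: "h ` {..<n} \<subseteq> {Suc T<..l}"
    and steps: "\<forall>i<n. {p i, p (Suc i)} = {w (h i - 1), w (h i)}"
    and rest: "\<forall>j\<in>{Suc T<..l} - h ` {..<n}.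
      \<exists>j'\<in>{Suc T<..l}. j' \<noteq> j \<and> {w (j' - 1), w j'} = {w (j - 1), w j}"
    using path(1) unfolding steps_embed_def by auto
  have "Suc T \<notin> h ` {..<n}"
    using range by auto
  then have "inj_on (case_nat (Suc T) h) {..<Suc n}"
    unfolding lessThan_Suc_eq_insert_0 inj_on_case_nat using inj by simp
  moreover have "case_nat (Suc T) h ` {..<Suc n} \<subseteq> {c<..l}"
    using range loop by (auto simp: lessThan_Suc_eq_insert_0)
  moreover have "\<forall>i<Suc n. {case_nat (w c) p i, case_nat (w c) p (Suc i)}
      = {w (case_nat (Suc T) h i - 1), w (case_nat (Suc T) h i)}"
  proof (intro allI impI)
    fix i assume "i < Suc n"
    then show "{case_nat (w c) p i, case_nat (w c) p (Suc i)}
      = {w (case_nat (Suc T) h i - 1), w (case_nat (Suc T) h i)}"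
      using steps path(2) loop(3) by (cases i) simp_all
  qed
  moreover have "\<exists>j'\<in>{c<..l}. j' \<noteq> j \<and> {w (j' - 1), w j'} = {w (j - 1), w j}"
    if j: "j \<in> {c<..l} - case_nat (Suc T) h ` {..<Suc n}" for j
  proof (cases "j \<le> T")
    case True
    then have "j \<in> {c<..T}"
      using j by simp
    then obtain j' where "j' \<in> {c<..T}" "j' \<noteq> j" "{w (j' - 1), w j'} = {w (j - 1), w j}"
      using twins by blast
    then show ?thesis
      using loop by (intro bexI[of _ j']) auto
  next
    case False
    then have "j \<in> {Suc T<..l} - h ` {..<n}"
      using j by (auto simp: lessThan_Suc_eq_insert_0 image_image)
    then obtain j' where "j' \<in> {Suc T<..l}" "j' \<noteq> j" "{w (j' - 1), w j'} = {w (j - 1), w j}"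
      using rest by blast
    then show ?thesis
      using loop by (intro bexI[of _ j']) auto
  qed
  ultimately show ?thesis
    unfolding steps_embed_def by blast
qed

lemma loop_erased_path_Nil:
  assumes "c \<le> l" "w l = w c"
    and twins: "\<forall>j\<in>{c<..l}. \<exists>j'\<in>{c<..l}. j' \<noteq> j \<and> {w (j' - 1), w j'} = {w (j - 1), w j}"
  shows "loop_erased_path w c l 0 (\<lambda>_. w c) h"
  using assms unfolding loop_erased_path_def steps_embed_def by auto

lemma loop_erased_path_Cons:
  assumes path: "loop_erased_path w (Suc T) l n p h"
    and loop: "c \<le> T" "T < l" "w T = w c" "\<forall>t\<in>{T<..l}. w t \<noteq> w c"
    and twins: "\<forall>j\<in>{c<..T}. \<exists>j'\<in>{c<..T}. j' \<noteq> j \<and> {w (j' - 1), w j'} = {w (j - 1), w j}"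
  shows "loop_erased_path w c l (Suc n) (case_nat (w c) p) (case_nat (Suc T) h)"
proof -
  have p: "p 0 = w (Suc T)" "p n = w l" "inj_on p {..n}" "p ` {..n} \<subseteq> w ` {Suc T..l}"
    and steps: "steps_embed w (Suc T) l n p h"
    using path unfolding loop_erased_path_def by auto
  have "w c \<notin> p ` {..n}"
    using p(4) loop(4) by fastforce
  then have "inj_on (case_nat (w c) p) {..Suc n}"
    unfolding atMost_Suc_eq_insert_0 inj_on_case_nat using p(3) by simp
  moreover have "case_nat (w c) p ` {..Suc n} \<subseteq> w ` {c..l}"
    using p(4) loop by (auto simp: atMost_Suc_eq_insert_0)
  ultimately show ?thesis
    using steps_embed_Cons[OF steps p(1) loop(1-3) twins] p(2)
    unfolding loop_erased_path_def by simp
qed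

lemma loop_erased_path_exists:
  "first_nonpalindromic_loop w l c = None \<Longrightarrow> c \<le> l \<Longrightarrow> \<forall>j\<in>{c<..l}. w (j - 1) \<noteq> w j \<Longrightarrow>
    \<exists>n p h. loop_erased_path w c l n p h"
proof (induction w l c rule: first_nonpalindromic_loop.induct)
  case (1 w l c)
  show ?case
  proof (cases "c = l")
    case True
    then show ?thesis
      using loop_erased_path_Nil[of c l w] by auto
  next
    case False
    let ?T = "last_visit w l c"
    have cl: "c < l"
      using False "1.prems"(2) by simp
    have lv: "c \<le> ?T" "?T \<le> l" "w ?T = w c" "\<forall>t\<in>{?T<..l}. w t \<noteq> w c"
      using last_visit_ge[of c l w] last_visit_le[of c l w] last_visit_same[of c l w]
        last_visit_greatest[of c l w] cl by auto
    have sym: "reverse_segment c ?T w = w"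
      using "1.prems"(1) cl by (subst (asm) first_nonpalindromic_loop.simps) (auto split: if_splits)
    have twins: "\<forall>j\<in>{c<..?T}. \<exists>j'\<in>{c<..?T}. j' \<noteq> j \<and> {w (j' - 1), w j'} = {w (j - 1), w j}"
      using symmetric_loop_step_twin[OF sym] "1.prems"(3) lv(2) by auto
    show ?thesis
    proof (cases "?T = l")
      case True
      have "loop_erased_path w c l 0 (\<lambda>_. w c) id"
        by (rule loop_erased_path_Nil) (use cl lv(3) twins True in simp_all)
      then show ?thesis
        by blast
    next
      case False
      then have Tl: "?T < l"
        using lv(2) by simp
      have "first_nonpalindromic_loop w l (Suc ?T) = None"
        using "1.prems"(1) cl sym by (subst (asm) first_nonpalindromic_loop.simps) simp
      moreover have "\<forall>j\<in>{Suc ?T<..l}. w (j - 1) \<noteq> w j"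
        using "1.prems"(3) lv(1) by simp
      ultimately obtain n p h where "loop_erased_path w (Suc ?T) l n p h"
        using "1.IH" cl sym Tl by (meson Suc_leI not_le)
      then have "loop_erased_path w c l (Suc n) (case_nat (w c) p) (case_nat (Suc ?T) h)"
        using loop_erased_path_Cons lv(1,3,4) Tl twins by blast
      then show ?thesis
        by blast
    qed
  qed
qed

lemma greaterThan_0_atMost_eq_atLeastAtMost: "{0<..l} = {1..l::nat}"
  by auto

lemma edges_in_le_if_steps_embed:
  assumes "steps_embed w 0 l m q H"
  shows "edges_in m q X \<le> edges_in l w X"
proof -
  have inj: "inj_on H {..<m}" and range: "H ` {..<m} \<subseteq> {1..l}"
    and steps: "\<forall>i<m. {q i, q (Suc i)} = {w (H i - 1), w (H i)}"
    using assms unfolding steps_embed_def greaterThan_0_atMost_eq_atLeastAtMost by blast+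
  let ?g = "\<lambda>j. H (j - 1)"
  have "inj_on ?g {1..m}"
  proof (rule inj_onI)
    fix x y assume xy: "x \<in> {1..m}" "y \<in> {1..m}" "H (x - 1) = H (y - 1)"
    then have "x - 1 = y - 1"
      using inj_onD[OF inj] by auto
    then show "x = y"
      using xy by auto
  qed
  then have "inj_on ?g {j\<in>{1..m}. {q (j - 1), q j} \<in> X}"
    by (rule inj_on_subset) auto
  moreover have "?g ` {j\<in>{1..m}. {q (j - 1), q j} \<in> X} \<subseteq> {j\<in>{1..l}. {w (j - 1), w j} \<in> X}"
  proof
    fix x assume "x \<in> ?g ` {j\<in>{1..m}. {q (j - 1), q j} \<in> X}"
    then obtain j where j: "j \<in> {1..m}" "{q (j - 1), q j} \<in> X" "x = H (j - 1)"
      by auto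
    then have "j - 1 < m" "Suc (j - 1) = j"
      by auto
    then have "H (j - 1) \<in> {1..l}" "{q (j - 1), q j} = {w (H (j - 1) - 1), w (H (j - 1))}"
      using range steps[rule_format, of "j - 1"] by auto
    then show "x \<in> {j\<in>{1..l}. {w (j - 1), w j} \<in> X}"
      using j by simp
  qed
  ultimately show ?thesis
    unfolding edges_in_def by (intro card_inj_on_le) auto
qed

lemma edges_in_eq_1_if_steps_embed:
  assumes embed: "steps_embed w 0 l m q H" and once: "edges_in l w X = 1"
  shows "edges_in m q X = 1"
proof -
  have steps: "\<forall>i<m. {q i, q (Suc i)} = {w (H i - 1), w (H i)}"
    and rest: "\<forall>j\<in>{1..l} - H ` {..<m}. \<exists>j'\<in>{1..l}. j' \<noteq> j \<and> {w (j' - 1), w j'} = {w (j - 1), w j}"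
    using embed unfolding steps_embed_def greaterThan_0_atMost_eq_atLeastAtMost by blast+
  obtain j0 where j0: "{j\<in>{1..l}. {w (j - 1), w j} \<in> X} = {j0}"
    using once unfolding edges_in_def by (rule card_1_singletonE)
  \<comment> \<open>The only step of w in X has no twin, so it is a step of q.\<close>
  have "j0 \<in> H ` {..<m}"
  proof (rule ccontr)
    assume "j0 \<notin> H ` {..<m}"
    moreover have "j0 \<in> {1..l}" "{w (j0 - 1), w j0} \<in> X"
      using j0 by auto
    ultimately obtain j' where "j' \<in> {1..l}" "j' \<noteq> j0" "{w (j' - 1), w j'} = {w (j0 - 1), w j0}"
      using rest by blast
    then show False
      using j0 \<open>{w (j0 - 1), w j0} \<in> X\<close> by auto
  qed
  then obtain i where "i < m" "H i = j0"
    by auto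
  then have "Suc i \<in> {j\<in>{1..m}. {q (j - 1), q j} \<in> X}"
    using steps j0 by auto
  then have "edges_in m q X \<noteq> 0"
    unfolding edges_in_def by auto
  then show ?thesis
    using edges_in_le_if_steps_embed[OF embed, of X] once by linarith
qed

lemma simple_cycle_if_steps_embed:
  assumes embed: "steps_embed w 0 l m q H" and walk: "\<forall>j\<in>{1..l}. {w (j - 1), w j} \<in> E"
    and cycle: "3 \<le> m" "q m = q 0" "inj_on q {0..<m}"
  shows "simple_cycle E m q"
proof -
  have range: "H ` {..<m} \<subseteq> {1..l}"
    and steps: "\<forall>i<m. {q i, q (Suc i)} = {w (H i - 1), w (H i)}"
    using embed unfolding steps_embed_def greaterThan_0_atMost_eq_atLeastAtMost by blast+
  have "{q (j - 1), q j} \<in> E" if j: "j \<in> {1..m}" for j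
  proof -
    have "j - 1 < m" "Suc (j - 1) = j"
      using j by auto
    then have "{q (j - 1), q j} = {w (H (j - 1) - 1), w (H (j - 1))}" "H (j - 1) \<in> {1..l}"
      using steps[rule_format, of "j - 1"] range by auto
    then show ?thesis
      using walk by auto
  qed
  then show ?thesis
    unfolding simple_cycle_def using cycle by simp
qed

lemma no_self_loop:
  assumes "simple_graph V E" "{x, y} \<in> E"
  shows "x \<noteq> y"
  using assms unfolding simple_graph_def by (metis doubleton_eq_iff insert_absorb2)

lemma good_cycle_of_loop_erased_path:
  assumes G: "simple_graph V E" and k: "k \<ge> 1" and w: "w \<in> admissible_walks E k S b l"
    and path: "loop_erased_path w 1 l n p h"
  shows "good_cycle E k S b (Suc n) (case_nat b p)" and "Suc n \<le> l"
proof -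
  let ?q = "case_nat b p" and ?H = "case_nat 1 h"
  note walk = admissible_walksD[OF w]
  have p: "p 0 = w 1" "p n = b" "inj_on p {..n}" "p ` {..n} \<subseteq> w ` {1..l}"
    and steps: "steps_embed w 1 l n p h"
    using path walk(2) unfolding loop_erased_path_def by auto
  have l: "0 < l"
    using p(4) by fastforce
  have embed: "steps_embed w 0 l (Suc n) ?q ?H"
    using steps_embed_Cons[of w 0 l n p h 0] steps p(1) l walk(1) by simp
  then have inj: "inj_on ?H {..<Suc n}" and range: "?H ` {..<Suc n} \<subseteq> {1..l}"
    unfolding steps_embed_def greaterThan_0_atMost_eq_atLeastAtMost by blast+
  show "Suc n \<le> l"
    using card_inj_on_le[OF inj range] by simp
  have once: "\<forall>i\<in>{1..k}. edges_in (Suc n) ?q (S i) = 1"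
    using edges_in_eq_1_if_steps_embed[OF embed] walk(5) by simp
  have "{w 0, w 1} \<in> E"
    using bspec[OF walk(3), of 1] l by simp
  then have "w 0 \<noteq> w 1"
    by (rule no_self_loop[OF G])
  then have "n \<noteq> 0"
    using p(1,2) walk(1) by (cases n) auto
  moreover have "n \<noteq> 1"
  proof
    assume "n = 1"
    then have "{j\<in>{1..Suc n}. {?q (j - 1), ?q j} \<in> S 1} = {1, 2}"
      using p(1,2) walk(1,4) by (auto simp: insert_commute)
    moreover have "edges_in (Suc n) ?q (S 1) = 1"
      using once k by simp
    ultimately show False
      unfolding edges_in_def by simp
  qed
  moreover have "inj_on ?q {0..<Suc n}"
    using inj_on_subset[OF p(3), of "{..<n}"] p(2) inj_on_eq_iff[OF p(3)]
    unfolding atLeast0LessThan lessThan_Suc_eq_insert_0 inj_on_case_nat by fastforce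
  ultimately have "simple_cycle E (Suc n) ?q"
    using simple_cycle_if_steps_embed[OF embed walk(3)] p(2) by simp
  moreover have "{?q 0, ?q 1} \<in> S 1"
    using p(1) walk(1,4) by simp
  ultimately show "good_cycle E k S b (Suc n) ?q"
    unfolding good_cycle_def using once by (intro conjI bexI[of _ 1]) auto
qed

lemma admissible_walk_length_pos:
  assumes "k \<ge> 1" "w \<in> admissible_walks E k S b l"
  shows "1 \<le> l"
proof (rule ccontr)
  assume "\<not> 1 \<le> l"
  then have "edges_in l w (S 1) = 0"
    by (simp add: edges_in_def)
  then show False
    using admissible_walksD(5)[OF assms(2)] assms(1) by simp
qed

lemma T_hat_eq_0_if_no_short_good_cycle:
  assumes char: "CHAR('f::comm_ring_1) = 2" and G: "simple_graph V E" and "b \<in> V" and k: "k \<ge> 1"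
    and short: "\<forall>L q. good_cycle E k S b L q \<longrightarrow> l < L"
  shows "(T_hat E k S b l :: ('v, 'f) epoly) = 0"
proof -
  have no_fixed_point: "loop_reversal l w \<noteq> w" if w: "w \<in> admissible_walks E k S b l" for w
  proof
    assume "loop_reversal l w = w"
    then have "first_nonpalindromic_loop w l 1 = None"
      by (simp add: loop_reversal_eq_iff)
    moreover have "1 \<le> l"
      by (rule admissible_walk_length_pos[OF k w])
    moreover have "\<forall>j\<in>{1<..l}. w (j - 1) \<noteq> w j"
      using admissible_walksD(3)[OF w] no_self_loop[OF G] by auto
    ultimately obtain n p h where "loop_erased_path w 1 l n p h"
      using loop_erased_path_exists by blast
    then have "good_cycle E k S b (Suc n) (case_nat b p)" "Suc n \<le> l"
      using good_cycle_of_loop_erased_path[OF G k w] by blast+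
    then show False
      using short by fastforce
  qed
  show ?thesis
    unfolding T_hat_eq_sum_walk_monomial
  proof (rule sum_involution_eq_0)
    fix w assume w: "w \<in> admissible_walks E k S b l"
    show "loop_reversal l w \<in> admissible_walks E k S b l"
      by (rule loop_reversal_in_admissible_walks[OF w])
    show "loop_reversal l (loop_reversal l w) = w"
      by (rule loop_reversal_loop_reversal)
    show "loop_reversal l w \<noteq> w"
      by (rule no_fixed_point[OF w])
    show "Poly_Mapping.single (walk_monomial l (loop_reversal l w)) (1::'f)
        + Poly_Mapping.single (walk_monomial l w) 1 = 0"
      unfolding walk_monomial_loop_reversal[OF w] by (rule add_self_eq_0_char_2[OF char])
  qed
qed

theorem mainTheorem2:
  fixes V :: "'v set" and E :: "'v set set" and S :: "nat \<Rightarrow> 'v set set"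
    and k :: nat and b :: 'v and L :: nat
  assumes "CHAR('f::field) = 2"
    and "simple_graph V E"
    and "k \<ge> 1"
    and "\<forall>i\<in>{1..k}. S i \<subseteq> E"
    and "b \<in> V"
    and "\<exists>w. good_cycle E k S b L w"
    and "\<forall>L' w. good_cycle E k S b L' w \<longrightarrow> L \<le> L'"
  shows "homogeneous_of_degree (T_hat E k S b L :: ('v, 'f) epoly) L
    \<and> (T_hat E k S b L :: ('v, 'f) epoly) \<noteq> 0
    \<and> (\<forall>l. 1 \<le> l \<and> l < L \<longrightarrow> (T_hat E k S b l :: ('v, 'f) epoly) = 0)"
proof (intro conjI allI impI)
  show "homogeneous_of_degree (T_hat E k S b L :: ('v, 'f) epoly) L"
    by (rule homogeneous_T_hat)
  obtain q where "good_cycle E k S b L q"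
    using assms(6) by blast
  then show "(T_hat E k S b L :: ('v, 'f) epoly) \<noteq> 0"
    by (rule T_hat_nonzero_if_good_cycle[OF assms(2,5,3)])
  fix l assume "1 \<le> l \<and> l < L"
  then have "\<forall>L' q. good_cycle E k S b L' q \<longrightarrow> l < L'"
    using assms(7) by fastforce
  then show "(T_hat E k S b l :: ('v, 'f) epoly) = 0"
    by (rule T_hat_eq_0_if_no_short_good_cycle[OF assms(1,2,5,3)])
qed

end
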